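(* Let $0<L<\infty$, $\varphi\in(0,1)$, and $\kappa_f,\kappa_s,h_v,c_{p,f},\dot m_c,A_c,R,\mu_f,K_D,K_F,p_{HG}>0$, $T_b>0$, $q_{HG}>0$. Let $(T_f,T_s)$ be the unique solution on $[0,L]$ of $$-\varphi\kappa_fT_f''+c_{p,f}\frac{\dot m_c}{A_c}T_f'=h_v(T_s-T_f),\qquad (1-\varphi)\kappa_sT_s''=h_v(T_s-T_f)\quad\text{on }(0,L),$$ $$T_f(0)=T_s(0)=T_b,\quad (1-\varphi)\kappa_sT_s'(L)=q_{HG}-c_{p,f}\frac{\dot m_c}{A_c}(T_s(L)-T_f(L)),\quad T_f'(L)=\frac{h_vA_c}{c_{p,f}\dot m_c}(T_s(L)-T_f(L)),$$ and assume $\frac{p_{HG}}{R\,T_f(L)}>\frac{\dot m_c}{\varphi A_c}\frac{1}{\sqrt{R\,T_b}}$. Let $\rho_f$ be the unique solution on $[0,L]$ of $\rho_f'(y)=\overline N(y,\rho_f(y))\rho_f(y)$, $\rho_f(L)=\frac{p_{HG}}{R\,T_f(L)}$, where $$\overline N(y,\rho)=\frac{R\,(c_{p,f}\dot m_c)^{-1}h_vA_c\,\rho^2\,(T_s(y)-T_f(y))+\frac{\dot m_c}{A_c}\Big(\frac{\mu_f}{K_D}+\frac{\dot m_c}{K_FA_c}\Big)}{\varphi^{-2}\big(\frac{\dot m_c}{A_c}\big)^2-R\,T_f(y)\,\rho^2},$$ and define the velocity $v(y)=\frac{\dot m_c}{A_c\,\rho_f(y)}$, $y\in[0,L]$. Then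 $v$ is positive and strictly monotonically increasing on $[0,L]$.
   Context: $v$ is the Darcy velocity of the coolant, determined from the constant mass flux $\rho_f v=\dot m_c/A_c$. *)

theory Defs
  imports "HOL-Analysis.Analysis"
begin

definition Nbar ::
  "real \<Rightarrow> real \<Rightarrow> real \<Rightarrow> real \<Rightarrow> real \<Rightarrow> real \<Rightarrow> real \<Rightarrow> real \<Rightarrow> real \<Rightarrow>
   (real \<Rightarrow> real) \<Rightarrow> (real \<Rightarrow> real) \<Rightarrow> real \<Rightarrow> real \<Rightarrow> real" where
  "Nbar R cpf mc hv Ac \<phi> muf KD KF Tf Ts y \<rho> =
     (R * inverse (cpf * mc) * hv * Ac * \<rho>^2 * (Ts y - Tf y)
        + (mc / Ac) * (muf / KD + mc / (KF * Ac)))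
     / (inverse (\<phi>^2) * (mc / Ac)^2 - R * Tf y * \<rho>^2)"

definition velocity :: "real \<Rightarrow> real \<Rightarrow> (real \<Rightarrow> real) \<Rightarrow> real \<Rightarrow> real" where
  "velocity mc Ac \<rho>f y = mc / (Ac * \<rho>f y)"

end

theory Submission
  imports Defs
begin

text \<open>The gap \<open>w = Ts - Tf\<close> obeys a minimum principle. It vanishes at 0. Where it attains a
  negative minimum \<open>m\<close> in the interior, the equation for \<open>Tf\<close> with the integrating factor
  \<open>exp (- c y / (\<phi> \<kappa>f))\<close>, \<open>c = cpf mc / Ac\<close>, and the boundary condition for \<open>Tf'\<close> at \<open>L\<close>
  give \<open>Tf' \<ge> hv m / c\<close>, and then the two equations force \<open>w'' < 0\<close>; at \<open>L\<close> the boundary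
  conditions and \<open>qHG > 0\<close> force \<open>w' > 0\<close>.
  Hence \<open>Ts \<ge> Tf\<close>, so \<open>Tf' \<ge> 0\<close> and \<open>Tf \<ge> Tb\<close>.

  Put \<open>\<rho>c = mc / (\<phi> Ac sqrt (R Tb))\<close>. A density \<open>\<rho> > \<rho>c\<close> makes the flow subsonic,
  \<open>(v / \<phi>)\<^sup>2 < R Tf\<close>, so the denominator of \<open>Nbar\<close> is negative while its numerator is
  positive, and \<open>\<rho>f' < 0\<close> there. Since \<open>\<rho>f L > \<rho>c\<close>, going backwards from \<open>L\<close> the density
  can never come down to \<open>\<rho>c\<close>: \<open>\<rho>f > \<rho>c > 0\<close> on \<open>[0, L]\<close> and \<open>\<rho>f\<close> is strictly decreasing,
  so \<open>v = mc / (Ac \<rho>f)\<close> is positive and strictly increasing.\<close>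

lemma has_real_derivative_at_right_endpoint_le:
  fixes f :: "real \<Rightarrow> real"
  assumes "a < b" and "c < b" and "(f has_real_derivative D) (at b within {a..b})"
    and "\<And>y. c < y \<Longrightarrow> y < b \<Longrightarrow> (f y - f b) / (y - b) \<le> K"
  shows "D \<le> K"
proof -
  have "((\<lambda>y. (f y - f b) / (y - b)) \<longlongrightarrow> D) (at_left b)"
    using assms(3) at_within_Icc_at_left[OF assms(1)] by (simp add: has_field_derivative_iff)
  moreover have "\<forall>\<^sub>F y in at_left b. (f y - f b) / (y - b) \<le> K"
    using eventually_at_left_real[OF assms(2)] by eventually_elim (use assms(4) in auto)
  ultimately show ?thesis
    by (rule tendsto_upperbound) (rule trivial_limit_at_left_real)
qed

lemma right_endpoint_derivative_le:
  fixes f f' :: "real \<Rightarrow> real"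
  assumes "a \<le> c" and "c < b" and D: "(f has_real_derivative D) (at b within {a..b})"
    and f': "\<And>x. x \<in> {c<..<b} \<Longrightarrow> (f has_real_derivative f' x) (at x)"
    and le: "\<And>x. x \<in> {c<..<b} \<Longrightarrow> f' x \<le> K"
  shows "D \<le> K"
proof (rule has_real_derivative_at_right_endpoint_le[OF _ \<open>c < b\<close> D])
  show "a < b" using assms(1,2) by simp
  fix y assume y: "c < y" "y < b"
  have "continuous (at x within {y..b}) f" if "x \<in> {y..b}" for x
  proof (cases "x = b")
    case True
    have "{y..b} \<subseteq> {a..b}" using y assms(1) by auto
    then show ?thesis
      using continuous_within_subset[OF DERIV_continuous[OF D]] True by blast
  next
    case False
    then have "x \<in> {c<..<b}" using that y by auto
    then show ?thesis
      by (rule continuous_at_imp_continuous_at_within[OF DERIV_isCont[OF f']])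
  qed
  then have cont: "continuous_on {y..b} (\<lambda>x. f x - K * x)"
    by (intro continuous_intros) (simp add: continuous_on_eq_continuous_within)
  have "f b - K * b \<le> f y - K * y"
  proof (rule DERIV_nonpos_imp_decreasing_open[of y b "\<lambda>x. f x - K * x", OF _ _ cont])
    fix x assume "y < x" "x < b"
    then have "x \<in> {c<..<b}" using y by simp
    then show "\<exists>l. ((\<lambda>x. f x - K * x) has_real_derivative l) (at x) \<and> l \<le> 0"
      using le[of x] by (intro exI[of _ "f' x - K"]) (auto intro!: derivative_eq_intros f')
  qed (use y in simp)
  then have "K * (y - b) \<le> f y - f b" by (simp add: algebra_simps)
  then show "(f y - f b) / (y - b) \<le> K" using y by (simp add: neg_divide_le_eq)
qed

lemma right_endpoint_min_derivative_nonpos: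
  fixes f :: "real \<Rightarrow> real"
  assumes "a < b" and "(f has_real_derivative D) (at b within {a..b})"
    and "\<And>y. y \<in> {a..b} \<Longrightarrow> f b \<le> f y"
  shows "D \<le> 0"
  using assms by (intro has_real_derivative_at_right_endpoint_le[OF assms(1,1,2)])
    (auto intro!: divide_nonneg_neg)

lemma interior_min_second_derivative_nonneg:
  fixes f f' :: "real \<Rightarrow> real"
  assumes x: "x \<in> {a<..<b}" and min: "\<And>y. y \<in> {a<..<b} \<Longrightarrow> f x \<le> f y"
    and f': "\<And>y. y \<in> {a<..<b} \<Longrightarrow> (f has_real_derivative f' y) (at y)"
    and f'': "(f' has_real_derivative D) (at x)"
  shows "0 \<le> D"
proof (rule ccontr)
  assume "\<not> 0 \<le> D"
  then obtain d where "d > 0" and d: "\<And>h. 0 < h \<Longrightarrow> h < d \<Longrightarrow> f' x < f' (x - h)"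
    using DERIV_neg_dec_left[OF f''] by force
  have "f' x = 0"
  proof (rule DERIV_local_min[OF f'[OF x]])
    show "0 < min (x - a) (b - x)" using x by simp
    show "\<forall>y. \<bar>x - y\<bar> < min (x - a) (b - x) \<longrightarrow> f x \<le> f y"
      by (auto intro: min simp: abs_if split: if_splits)
  qed
  define t where "t = x - min d (x - a) / 2"
  have t: "a < t" "t < x" using x \<open>d > 0\<close> by (auto simp: t_def min_def field_simps)
  have "f t < f x"
  proof (rule DERIV_pos_imp_increasing_open[OF \<open>t < x\<close>])
    show "\<exists>l. (f has_real_derivative l) (at z) \<and> 0 < l" if "t < z" "z < x" for z
      using that t x f' d[of "x - z"] \<open>f' x = 0\<close> by (intro exI[of _ "f' z"]) (auto simp: t_def)
    show "continuous_on {t..x} f"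
    proof (rule DERIV_atLeastAtMost_imp_continuous_on)
      fix z assume "t \<le> z" "z \<le> x"
      then show "\<exists>l. (f has_real_derivative l) (at z)" using t x f'[of z] by auto
    qed
  qed
  then show False using min[of t] t x by simp
qed

lemma above_barrier_strict_antimono_on:
  fixes \<rho> \<rho>' :: "real \<Rightarrow> real"
  assumes d\<rho>: "\<And>y. y \<in> {a..b} \<Longrightarrow> (\<rho> has_real_derivative \<rho>' y) (at y within {a..b})"
    and neg: "\<And>y. y \<in> {a..b} \<Longrightarrow> c < \<rho> y \<Longrightarrow> \<rho>' y < 0"
    and end_above: "c < \<rho> b"
  shows "(\<forall>y\<in>{a..b}. c < \<rho> y) \<and> strict_antimono_on {a..b} \<rho>"
proof -
  have cont: "continuous_on {a..b} \<rho>" by (rule DERIV_continuous_on[OF d\<rho>])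
  have decreasing: "\<rho> y < \<rho> x"
    if xy: "a \<le> x" "x < y" "y \<le> b" and above: "\<And>z. z \<in> {x<..<y} \<Longrightarrow> c < \<rho> z" for x y
  proof (rule DERIV_neg_imp_decreasing_open[OF \<open>x < y\<close>])
    fix z assume z: "x < z" "z < y"
    then have "(\<rho> has_real_derivative \<rho>' z) (at z)"
      using d\<rho>[of z] at_within_Icc_at[of a z b] xy by simp
    then show "\<exists>l. (\<rho> has_real_derivative l) (at z) \<and> l < 0"
      using neg[of z] above[of z] xy z by auto
  next
    show "continuous_on {x..y} \<rho>" using cont by (rule continuous_on_subset) (use xy in auto)
  qed
  have above: "\<forall>y\<in>{a..b}. c < \<rho> y"
  proof (rule ccontr)
    assume "\<not> (\<forall>y\<in>{a..b}. c < \<rho> y)"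
    then obtain y1 where y1: "y1 \<in> {a..b}" "\<rho> y1 \<le> c" by force
    define S where "S = {a..b} \<inter> \<rho> -` {..c}"
    have "S \<noteq> {}" using y1 by (auto simp: S_def)
    moreover have "bdd_above S" by (rule bdd_aboveI[of _ b]) (auto simp: S_def)
    moreover have "closed S" unfolding S_def
      by (rule continuous_closed_preimage[OF cont]) auto
    ultimately have "Sup S \<in> S" by (rule closed_contains_Sup)
    then have s: "a \<le> Sup S" "Sup S \<le> b" "\<rho> (Sup S) \<le> c" by (auto simp: S_def)
    have "c < \<rho> z" if "Sup S < z" "z \<le> b" for z
      using cSup_upper[OF _ \<open>bdd_above S\<close>, of z] that s by (force simp: S_def)
    moreover have "Sup S < b" using s end_above by (cases "Sup S = b") auto
    ultimately have "\<rho> b < \<rho> (Sup S)" using s by (intro decreasing) auto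
    then show False using s end_above by simp
  qed
  have "strict_antimono_on {a..b} \<rho>"
    by (rule monotone_onI) (use above in \<open>auto intro!: decreasing\<close>)
  with above show ?thesis by blast
qed

locale two_temperature_solution =
  fixes L \<alpha> \<beta> a h q :: real
    and Tf Tf' Tf'' Ts Ts' Ts'' :: "real \<Rightarrow> real"
  assumes length_pos: "0 < L" and coeffs_pos: "0 < \<alpha>" "0 < \<beta>" "0 < a" "0 < h" "0 < q"
    and Tf_deriv: "\<And>y. y \<in> {0..L} \<Longrightarrow> (Tf has_real_derivative Tf' y) (at y within {0..L})"
    and Ts_deriv: "\<And>y. y \<in> {0..L} \<Longrightarrow> (Ts has_real_derivative Ts' y) (at y within {0..L})"
    and Tf'_deriv: "\<And>y. y \<in> {0<..<L} \<Longrightarrow> (Tf' has_real_derivative Tf'' y) (at y)"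
    and Ts'_deriv: "\<And>y. y \<in> {0<..<L} \<Longrightarrow> (Ts' has_real_derivative Ts'' y) (at y)"
    and Tf_ode: "\<And>y. y \<in> {0<..<L} \<Longrightarrow> - \<beta> * Tf'' y + a * Tf' y = h * (Ts y - Tf y)"
    and Ts_ode: "\<And>y. y \<in> {0<..<L} \<Longrightarrow> \<alpha> * Ts'' y = h * (Ts y - Tf y)"
    and left_bc: "Tf 0 = Ts 0"
    and Tf_right_bc: "a * Tf' L = h * (Ts L - Tf L)"
    and Ts_right_bc: "\<alpha> * Ts' L = q - a * (Ts L - Tf L)"
begin

lemma Tf_deriv_interior: "y \<in> {0<..<L} \<Longrightarrow> (Tf has_real_derivative Tf' y) (at y)"
  using Tf_deriv[of y] at_within_Icc_at[of 0 y L] by simp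

lemma Ts_deriv_interior: "y \<in> {0<..<L} \<Longrightarrow> (Ts has_real_derivative Ts' y) (at y)"
  using Ts_deriv[of y] at_within_Icc_at[of 0 y L] by simp

lemma Tf'_le_right_of_low_point:
  assumes gap: "\<And>y. y \<in> {0..L} \<Longrightarrow> m \<le> Ts y - Tf y"
    and y0: "y0 \<in> {0<..<L}" and below: "Tf' y0 < h / a * m"
    and y: "y0 \<le> y" "y < L"
  shows "Tf' y \<le> Tf' y0"
proof -
  define k where "k = a / \<beta>"
  define g where "g x = exp (- k * x) * (Tf' x - h / a * m)" for x
  have dg: "(g has_real_derivative exp (- k * x) * (h / \<beta> * (m - (Ts x - Tf x)))) (at x)"
    if x: "x \<in> {0<..<L}" for x
  proof -
    have ode: "\<beta> * Tf'' x = a * Tf' x - h * (Ts x - Tf x)"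
      using Tf_ode[OF x] by (simp add: algebra_simps)
    have "- k * (Tf' x - h / a * m) + Tf'' x = (\<beta> * Tf'' x - a * Tf' x + h * m) / \<beta>"
      using coeffs_pos by (simp add: k_def field_simps)
    also have "\<dots> = h / \<beta> * (m - (Ts x - Tf x))"
      unfolding ode by (simp add: field_simps)
    finally have eq: "- k * (Tf' x - h / a * m) + Tf'' x = h / \<beta> * (m - (Ts x - Tf x))" .
    have "(g has_real_derivative exp (- k * x) * (- k * (Tf' x - h / a * m) + Tf'' x)) (at x)"
      unfolding g_def using coeffs_pos
      by (auto intro!: derivative_eq_intros Tf'_deriv x simp: algebra_simps)
    then show ?thesis unfolding eq .
  qed
  have "g y \<le> g y0"
  proof (rule DERIV_nonpos_imp_nonincreasing[OF \<open>y0 \<le> y\<close>])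
    fix x assume "y0 \<le> x" "x \<le> y"
    then have x: "x \<in> {0<..<L}" using y0 y by auto
    have "h / \<beta> * (m - (Ts x - Tf x)) \<le> 0"
      using gap[of x] x coeffs_pos by (intro mult_nonneg_nonpos) auto
    then show "\<exists>l. (g has_real_derivative l) (at x) \<and> l \<le> 0"
      using dg[OF x] mult_nonneg_nonpos[OF exp_ge_zero] by blast
  qed
  have "g y0 < 0" using below by (simp add: g_def mult_pos_neg)
  have "Tf' y - h / a * m = exp (k * y) * g y"
    by (simp add: g_def exp_minus field_simps)
  also have "\<dots> \<le> exp (k * y) * g y0"
    using \<open>g y \<le> g y0\<close> by (intro mult_left_mono) auto
  also have "\<dots> \<le> exp (k * y0) * g y0"
  proof (rule mult_right_mono_neg)
    have "k * y0 \<le> k * y" using y coeffs_pos by (intro mult_left_mono) (auto simp: k_def)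
    then show "exp (k * y0) \<le> exp (k * y)" by simp
  qed (use \<open>g y0 < 0\<close> in simp)
  also have "\<dots> = Tf' y0 - h / a * m"
    by (simp add: g_def exp_minus field_simps)
  finally show ?thesis by simp
qed

lemma Tf'_lower_bound:
  assumes gap: "\<And>y. y \<in> {0..L} \<Longrightarrow> m \<le> Ts y - Tf y" and y0: "y0 \<in> {0<..<L}"
  shows "h / a * m \<le> Tf' y0"
proof (rule ccontr)
  assume below: "\<not> h / a * m \<le> Tf' y0"
  have "h * m \<le> h * (Ts L - Tf L)"
    using gap[of L] length_pos coeffs_pos by (intro mult_left_mono) auto
  then have "h / a * m \<le> Tf' L"
    using Tf_right_bc coeffs_pos by (simp add: field_simps)
  moreover have "Tf' L \<le> Tf' y0"
  proof (rule right_endpoint_derivative_le[of 0 y0 L Tf])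
    show "(Tf has_real_derivative Tf' L) (at L within {0..L})" using Tf_deriv length_pos by simp
    show "\<And>x. x \<in> {y0<..<L} \<Longrightarrow> Tf' x \<le> Tf' y0"
      using Tf'_le_right_of_low_point[OF gap y0] below by auto
  qed (use y0 Tf_deriv_interior in auto)
  ultimately show False using below by simp
qed

lemma gap_derivative_pos_at_L:
  assumes "Ts L - Tf L < 0"
  shows "Tf' L < Ts' L"
proof -
  have "a * (Ts L - Tf L) < 0" using assms coeffs_pos by (simp add: mult_pos_neg)
  then have "0 < \<alpha> * Ts' L" using Ts_right_bc coeffs_pos by simp
  moreover have "a * Tf' L < 0" using Tf_right_bc assms coeffs_pos by (simp add: mult_pos_neg)
  ultimately show ?thesis using coeffs_pos by (simp add: zero_less_mult_iff mult_less_0_iff)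
qed

lemma gap_second_derivative_neg_at_negative_min:
  assumes y: "y \<in> {0<..<L}" and min: "\<And>z. z \<in> {0..L} \<Longrightarrow> Ts y - Tf y \<le> Ts z - Tf z"
    and neg: "Ts y - Tf y < 0"
  shows "Ts'' y < Tf'' y"
proof -
  have "\<alpha> * Ts'' y < 0" using Ts_ode[OF y] neg coeffs_pos by (simp add: mult_pos_neg)
  then have "Ts'' y < 0" using coeffs_pos by (simp add: mult_less_0_iff)
  have "h / a * (Ts y - Tf y) \<le> Tf' y" by (rule Tf'_lower_bound[OF min y])
  then have "h * (Ts y - Tf y) \<le> a * Tf' y" using coeffs_pos by (simp add: field_simps)
  then have "0 \<le> \<beta> * Tf'' y" using Tf_ode[OF y] by simp
  then have "0 \<le> Tf'' y" using coeffs_pos by (simp add: zero_le_mult_iff)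
  with \<open>Ts'' y < 0\<close> show ?thesis by simp
qed

lemma gap_nonneg:
  assumes "y \<in> {0..L}"
  shows "Tf y \<le> Ts y"
proof (rule ccontr)
  assume "\<not> Tf y \<le> Ts y"
  have cont: "continuous_on {0..L} (\<lambda>x. Ts x - Tf x)"
    by (intro continuous_on_diff DERIV_continuous_on[OF Ts_deriv] DERIV_continuous_on[OF Tf_deriv])
  obtain y0 where y0: "y0 \<in> {0..L}" and min: "\<And>z. z \<in> {0..L} \<Longrightarrow> Ts y0 - Tf y0 \<le> Ts z - Tf z"
    using continuous_attains_inf[OF compact_Icc _ cont] length_pos by auto
  have neg: "Ts y0 - Tf y0 < 0" using min[OF assms] \<open>\<not> Tf y \<le> Ts y\<close> by simp
  then have "y0 \<noteq> 0" using left_bc by auto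
  moreover have "y0 \<noteq> L"
  proof
    assume "y0 = L"
    have "Ts' L - Tf' L \<le> 0"
    proof (rule right_endpoint_min_derivative_nonpos[OF length_pos, of "\<lambda>x. Ts x - Tf x"])
      show "((\<lambda>x. Ts x - Tf x) has_real_derivative Ts' L - Tf' L) (at L within {0..L})"
        using length_pos by (intro DERIV_diff Ts_deriv Tf_deriv) auto
    qed (use min \<open>y0 = L\<close> in auto)
    then show False using gap_derivative_pos_at_L neg \<open>y0 = L\<close> by simp
  qed
  ultimately have y0': "y0 \<in> {0<..<L}" using y0 by auto
  have "0 \<le> Ts'' y0 - Tf'' y0"
  proof (rule interior_min_second_derivative_nonneg
      [OF y0', of "\<lambda>x. Ts x - Tf x" "\<lambda>x. Ts' x - Tf' x"])
    show "\<And>z. z \<in> {0<..<L} \<Longrightarrow> Ts y0 - Tf y0 \<le> Ts z - Tf z" using min by auto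
    show "\<And>z. z \<in> {0<..<L} \<Longrightarrow>
        ((\<lambda>x. Ts x - Tf x) has_real_derivative Ts' z - Tf' z) (at z)"
      by (intro DERIV_diff Ts_deriv_interior Tf_deriv_interior)
    show "((\<lambda>x. Ts' x - Tf' x) has_real_derivative Ts'' y0 - Tf'' y0) (at y0)"
      by (intro DERIV_diff Ts'_deriv Tf'_deriv y0')
  qed
  then show False using gap_second_derivative_neg_at_negative_min[OF y0' min neg] by simp
qed

lemma Tf_ge_Tf0:
  assumes "y \<in> {0..L}"
  shows "Tf 0 \<le> Tf y"
proof (rule DERIV_nonneg_imp_increasing_open[of 0 y Tf])
  show "0 \<le> y" using assms by simp
  fix x assume "0 < x" "x < y"
  then have x: "x \<in> {0<..<L}" using assms by simp
  have "h / a * 0 \<le> Tf' x" by (rule Tf'_lower_bound[OF _ x]) (simp add: gap_nonneg)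
  then show "\<exists>l. (Tf has_real_derivative l) (at x) \<and> 0 \<le> l"
    using Tf_deriv_interior[OF x] by auto
next
  show "continuous_on {0..y} Tf"
    using DERIV_continuous_on[OF Tf_deriv] by (rule continuous_on_subset) (use assms in auto)
qed

end

lemma Nbar_neg:
  assumes "0 < R" "0 < cpf" "0 < mc" "0 < hv" "0 < Ac" "0 < muf" "0 < KD" "0 < KF"
    and "Tf y \<le> Ts y" and "inverse (\<phi>^2) * (mc / Ac)^2 < R * Tf y * \<rho>^2"
  shows "Nbar R cpf mc hv Ac \<phi> muf KD KF Tf Ts y \<rho> < 0"
  unfolding Nbar_def
proof (rule divide_pos_neg)
  have "0 \<le> R * inverse (cpf * mc) * hv * Ac * \<rho>^2 * (Ts y - Tf y)"
    using assms by simp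
  moreover have "0 < (mc / Ac) * (muf / KD + mc / (KF * Ac))"
    using assms by (intro mult_pos_pos add_pos_pos divide_pos_pos) auto
  ultimately show "0 < R * inverse (cpf * mc) * hv * Ac * \<rho>^2 * (Ts y - Tf y)
      + (mc / Ac) * (muf / KD + mc / (KF * Ac))" by linarith
  show "inverse (\<phi>^2) * (mc / Ac)^2 - R * Tf y * \<rho>^2 < 0" using assms by simp
qed

lemma subsonic_above_critical_density:
  fixes \<phi> mc Ac R Tb T \<rho> :: real
  assumes "0 < \<phi>" "0 < mc" "0 < Ac" "0 < R" "0 < Tb" "Tb \<le> T"
    and "mc / (\<phi> * Ac) * (1 / sqrt (R * Tb)) < \<rho>"
  shows "inverse (\<phi>^2) * (mc / Ac)^2 < R * T * \<rho>^2"
proof -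
  define \<rho>c where "\<rho>c = mc / (\<phi> * Ac) * (1 / sqrt (R * Tb))"
  have "0 < \<rho>c" using assms by (simp add: \<rho>c_def)
  have "inverse (\<phi>^2) * (mc / Ac)^2 = R * Tb * \<rho>c^2"
    using assms by (simp add: \<rho>c_def power_divide power_mult_distrib field_simps)
  also have "\<dots> < R * Tb * \<rho>^2"
    using assms \<open>0 < \<rho>c\<close> by (simp add: \<rho>c_def power_strict_mono)
  also have "\<dots> \<le> R * T * \<rho>^2"
    using assms by (intro mult_right_mono mult_left_mono) auto
  finally show ?thesis .
qed

lemma velocity_pos_strict_mono_on:
  assumes "0 < mc" "0 < Ac" and "\<And>y. y \<in> S \<Longrightarrow> 0 < \<rho> y"
    and "strict_antimono_on S \<rho>"
  shows "(\<forall>y\<in>S. 0 < velocity mc Ac \<rho> y) \<and> strict_mono_on S (velocity mc Ac \<rho>)"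
proof
  show "\<forall>y\<in>S. 0 < velocity mc Ac \<rho> y"
    using assms by (simp add: velocity_def)
  show "strict_mono_on S (velocity mc Ac \<rho>)"
  proof (rule strict_mono_onI)
    fix x y assume xy: "x \<in> S" "y \<in> S" "x < y"
    then have "Ac * \<rho> y < Ac * \<rho> x"
      using assms monotone_onD[OF \<open>strict_antimono_on S \<rho>\<close>] by simp
    then show "velocity mc Ac \<rho> x < velocity mc Ac \<rho> y"
      unfolding velocity_def using assms xy by (intro divide_strict_left_mono) auto
  qed
qed

theorem proposition4:
  fixes L \<phi> \<kappa>f \<kappa>s hv cpf mc Ac R muf KD KF pHG Tb qHG :: real
    and Tf Tf' Tf'' Ts Ts' Ts'' \<rho>f :: "real \<Rightarrow> real"
  assumes L: "0 < L"
    and phi: "0 < \<phi>" "\<phi> < 1"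
    and pos: "0 < \<kappa>f" "0 < \<kappa>s" "0 < hv" "0 < cpf" "0 < mc" "0 < Ac" "0 < R"
             "0 < muf" "0 < KD" "0 < KF" "0 < pHG" "0 < Tb" "0 < qHG"
    \<comment> \<open>(Tf, Ts) is a classical solution of the heat problem on [0,L]\<close>
    and dTf: "\<And>y. y \<in> {0..L} \<Longrightarrow> (Tf has_real_derivative Tf' y) (at y within {0..L})"
    and dTs: "\<And>y. y \<in> {0..L} \<Longrightarrow> (Ts has_real_derivative Ts' y) (at y within {0..L})"
    and ddTf: "\<And>y. y \<in> {0<..<L} \<Longrightarrow> (Tf' has_real_derivative Tf'' y) (at y)"
    and ddTs: "\<And>y. y \<in> {0<..<L} \<Longrightarrow> (Ts' has_real_derivative Ts'' y) (at y)"
    and odeTf: "\<And>y. y \<in> {0<..<L} \<Longrightarrow>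
       - \<phi> * \<kappa>f * Tf'' y + cpf * (mc / Ac) * Tf' y = hv * (Ts y - Tf y)"
    and odeTs: "\<And>y. y \<in> {0<..<L} \<Longrightarrow>
       (1 - \<phi>) * \<kappa>s * Ts'' y = hv * (Ts y - Tf y)"
    and bc0: "Tf 0 = Tb" "Ts 0 = Tb"
    and bcL1: "(1 - \<phi>) * \<kappa>s * Ts' L = qHG - cpf * (mc / Ac) * (Ts L - Tf L)"
    and bcL2: "Tf' L = hv * Ac / (cpf * mc) * (Ts L - Tf L)"
    and hyp: "pHG / (R * Tf L) > mc / (\<phi> * Ac) * (1 / sqrt (R * Tb))"
    \<comment> \<open>\<rho>f solves the density ODE on [0,L] with terminal condition\<close>
    and d\<rho>: "\<And>y. y \<in> {0..L} \<Longrightarrow>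
       (\<rho>f has_real_derivative (Nbar R cpf mc hv Ac \<phi> muf KD KF Tf Ts y (\<rho>f y) * \<rho>f y))
         (at y within {0..L})"
    and \<rho>L: "\<rho>f L = pHG / (R * Tf L)"
  shows "(\<forall>y\<in>{0..L}. 0 < velocity mc Ac \<rho>f y) \<and> strict_mono_on {0..L} (velocity mc Ac \<rho>f)"
proof -
  interpret two_temperature_solution L "(1 - \<phi>) * \<kappa>s" "\<phi> * \<kappa>f" "cpf * (mc / Ac)" hv qHG
    Tf Tf' Tf'' Ts Ts' Ts''
  proof
    show "cpf * (mc / Ac) * Tf' L = hv * (Ts L - Tf L)"
      using bcL2 pos by (simp add: field_simps)
  qed (use L phi pos dTf dTs ddTf ddTs odeTf odeTs bc0 bcL1 in auto)
  define \<rho>c where "\<rho>c = mc / (\<phi> * Ac) * (1 / sqrt (R * Tb))"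
  have "0 < \<rho>c" using phi pos by (simp add: \<rho>c_def)
  have \<rho>'_neg: "Nbar R cpf mc hv Ac \<phi> muf KD KF Tf Ts y (\<rho>f y) * \<rho>f y < 0"
    if y: "y \<in> {0..L}" and above: "\<rho>c < \<rho>f y" for y
  proof (rule mult_neg_pos)
    have "Tb \<le> Tf y" using Tf_ge_Tf0[OF y] bc0 by simp
    with above have "inverse (\<phi>^2) * (mc / Ac)^2 < R * Tf y * \<rho>f y ^ 2"
      unfolding \<rho>c_def by (rule subsonic_above_critical_density[OF phi(1) pos(5,6,7,12), rotated])
    then show "Nbar R cpf mc hv Ac \<phi> muf KD KF Tf Ts y (\<rho>f y) < 0"
      using gap_nonneg[OF y] by (intro Nbar_neg pos)
    show "0 < \<rho>f y" using \<open>0 < \<rho>c\<close> above by linarith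
  qed
  have "(\<forall>y\<in>{0..L}. \<rho>c < \<rho>f y) \<and> strict_antimono_on {0..L} \<rho>f"
    by (rule above_barrier_strict_antimono_on[OF d\<rho> \<rho>'_neg])
      (use hyp \<rho>L in \<open>simp_all add: \<rho>c_def\<close>)
  then have "\<forall>y\<in>{0..L}. 0 < \<rho>f y" "strict_antimono_on {0..L} \<rho>f"
    using \<open>0 < \<rho>c\<close> by (auto intro: order.strict_trans)
  then show ?thesis by (intro velocity_pos_strict_mono_on pos(5,6)) auto
qed

end
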